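(* Let $B\ge1$ and $\mathcal{E}>0$. Let $\widetilde{\mathbf{t}}=(\widetilde t_0,\dots,\widetilde t_{B-1})$ be the optimal solution of $$\text{minimize}_{\mathbf{t}}\ \sum_{b=0}^{B-1}4^b\exp(-2t_b)\quad\text{subject to}\quad\sum_{b=0}^{B-1}4t_b\le\mathcal{E},\ \ t_b\ge0,$$ (i.e. the duration subproblem with currents fixed at $i_b=2$), which is given by $\widetilde t_b=0$ if $\nu\ge 4^b/2$ and $\widetilde t_b=\tfrac12\log\bigl(\tfrac{1}{\nu}\cdot\tfrac{4^b}{2}\bigr)$ otherwise, with $\nu$ the dual variable of the energy constraint. If $\mathcal{E}>2B(B-1)\log 2$, then $\widetilde t_b>0$ for all $b\in\{0,\dots,B-1\}$ and $$\widetilde t_b=\frac{\mathcal{E}}{4B}+\Bigl(b-\frac{B-1}{2}\Bigr)\log 2.$$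
   Context: $\log$ denotes the natural logarithm. *)

theory Defs
  imports Complex_Main
begin

definition dur_obj :: "nat \<Rightarrow> (nat \<Rightarrow> real) \<Rightarrow> real" where
  "dur_obj B t = (\<Sum>b<B. 4 ^ b * exp (- 2 * t b))"

definition dur_feasible :: "nat \<Rightarrow> real \<Rightarrow> (nat \<Rightarrow> real) \<Rightarrow> bool" where
  "dur_feasible B E t \<longleftrightarrow> (\<Sum>b<B. 4 * t b) \<le> E \<and> (\<forall>b<B. t b \<ge> 0)"

definition dur_optimal :: "nat \<Rightarrow> real \<Rightarrow> (nat \<Rightarrow> real) \<Rightarrow> bool" where
  "dur_optimal B E t \<longleftrightarrow> dur_feasible B E t \<and>
     (\<forall>s. dur_feasible B E s \<longrightarrow> dur_obj B t \<le> dur_obj B s)"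

end

theory Submission
  imports Defs
begin

text \<open>The summands \<open>4^b exp(-2 t_b)\<close> are strictly convex, so a feasible point at which all
  marginal costs \<open>4^b exp(-2 t_b)\<close> coincide and the energy budget is exhausted is the unique
  minimiser: summing the tangent-line bounds at that point shows every other feasible point
  costs strictly more. Equal marginal costs force \<open>t_b = t_0 + b ln 2\<close>, and the budget then
  determines \<open>t_0 = E/(4B) - (B-1)/2 ln 2\<close>, which is positive exactly when
  \<open>E > 2B(B-1) ln 2\<close>.\<close>

lemma sum_exp_less_of_equal_marginals:
  fixes a u s :: "'i \<Rightarrow> real"
  assumes "finite I" and "c > 0"
    and marginal: "\<And>i. i \<in> I \<Longrightarrow> a i * exp (- u i) = c"
    and budget: "sum s I \<le> sum u I"
    and "j \<in> I" and "s j \<noteq> u j"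
  shows "(\<Sum>i\<in>I. a i * exp (- u i)) < (\<Sum>i\<in>I. a i * exp (- s i))"
proof -
  have tangent: "a i * exp (- s i) = c * exp (- (s i - u i))" if "i \<in> I" for i
  proof -
    have "exp (- s i) = exp (- u i) * exp (- (s i - u i))"
      by (simp flip: exp_add)
    then show ?thesis
      using marginal[OF that] by (simp flip: mult.assoc)
  qed
  have "(\<Sum>i\<in>I. a i * exp (- u i)) = (\<Sum>i\<in>I. c)"
    using marginal by simp
  also have "\<dots> = (\<Sum>i\<in>I. c * (1 - (s i - u i))) + c * (sum s I - sum u I)"
    by (simp add: sum.distrib sum_subtractf sum_distrib_left algebra_simps)
  also have "\<dots> \<le> (\<Sum>i\<in>I. c * (1 - (s i - u i)))"
    using budget \<open>c > 0\<close> by (simp add: mult_nonneg_nonpos)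
  also have "\<dots> < (\<Sum>i\<in>I. a i * exp (- s i))"
  proof (rule sum_strict_mono_ex1)
    show "\<forall>i\<in>I. c * (1 - (s i - u i)) \<le> a i * exp (- s i)"
      using tangent exp_minus_ge \<open>c > 0\<close> by (simp del: minus_diff_eq)
    show "\<exists>i\<in>I. c * (1 - (s i - u i)) < a i * exp (- s i)"
      using tangent exp_minus_greater \<open>c > 0\<close> \<open>j \<in> I\<close> \<open>s j \<noteq> u j\<close> by (force simp del: minus_diff_eq)
  qed (fact \<open>finite I\<close>)
  finally show ?thesis .
qed

definition dur_closed_form :: "nat \<Rightarrow> real \<Rightarrow> nat \<Rightarrow> real" where
  "dur_closed_form B E b = E / (4 * real B) + (real b - (real B - 1) / 2) * ln 2"

lemma dur_closed_form_shift:
  "dur_closed_form B E b = dur_closed_form B E 0 + real b * ln 2"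
  unfolding dur_closed_form_def by (simp add: algebra_simps)

lemma dur_closed_form_pos:
  assumes "B \<ge> 1" and "E > 0" and "E > 2 * real B * (real B - 1) * ln 2"
  shows "dur_closed_form B E b > 0"
proof -
  have "(real B - 1) / 2 * ln 2 < E / (4 * real B)"
    using assms by (simp add: field_simps)
  then have "dur_closed_form B E 0 > 0"
    unfolding dur_closed_form_def by simp
  moreover have "real b * ln 2 \<ge> 0"
    by simp
  ultimately show ?thesis
    by (subst dur_closed_form_shift) linarith
qed

lemma dur_closed_form_equal_marginals:
  "4 ^ b * exp (- 2 * dur_closed_form B E b) = exp (- 2 * dur_closed_form B E 0)"
proof -
  have "exp (2 * (real b * ln 2)) = exp (real b * ln 4)"
    using ln_realpow[of 2 2] by simp
  also have "\<dots> = 4 ^ b"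
    by (simp add: exp_of_nat_mult)
  finally have "exp (2 * dur_closed_form B E b) = 4 ^ b * exp (2 * dur_closed_form B E 0)"
    by (subst dur_closed_form_shift) (simp add: distrib_left exp_add)
  then show ?thesis
    by (simp add: exp_minus field_simps)
qed

lemma sum_dur_closed_form:
  assumes "B \<ge> 1"
  shows "(\<Sum>b<B. 4 * dur_closed_form B E b) = E"
proof -
  have gauss: "(\<Sum>b<B. 2 * real b) = real B * (real B - 1)"
    by (induction B) (auto simp: algebra_simps)
  have "(\<Sum>b<B. 4 * dur_closed_form B E b)
      = (\<Sum>b<B. E / real B + 2 * real b * (2 * ln 2) - 2 * (real B - 1) * ln 2)"
    unfolding dur_closed_form_def using assms by (intro sum.cong) (auto simp: field_simps)
  also have "\<dots> = E + (\<Sum>b<B. 2 * real b) * (2 * ln 2) - 2 * real B * (real B - 1) * ln 2"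
    using assms by (simp add: sum.distrib sum_subtractf sum_distrib_right)
  finally show ?thesis
    by (simp add: gauss)
qed

lemma dur_feasible_closed_form:
  assumes "B \<ge> 1" and "E > 0" and "E > 2 * real B * (real B - 1) * ln 2"
  shows "dur_feasible B E (dur_closed_form B E)"
  unfolding dur_feasible_def
  using sum_dur_closed_form dur_closed_form_pos assms by (simp add: less_imp_le)

lemma dur_optimal_eq_closed_form:
  assumes "B \<ge> 1" and "E > 0" and "E > 2 * real B * (real B - 1) * ln 2"
    and "dur_optimal B E t" and "b < B"
  shows "t b = dur_closed_form B E b"
proof (rule ccontr)
  assume "t b \<noteq> dur_closed_form B E b"
  have "(\<Sum>b<B. 2 * t b) \<le> (\<Sum>b<B. 2 * dur_closed_form B E b)"
    using \<open>dur_optimal B E t\<close> sum_dur_closed_form[OF \<open>B \<ge> 1\<close>, of E]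
    unfolding dur_optimal_def dur_feasible_def by (simp flip: sum_distrib_left)
  then have "dur_obj B (dur_closed_form B E) < dur_obj B t"
    unfolding dur_obj_def
    using sum_exp_less_of_equal_marginals[of "{..<B}" _ "\<lambda>b. 4 ^ b"
        "\<lambda>b. 2 * dur_closed_form B E b" "\<lambda>b. 2 * t b" b]
      dur_closed_form_equal_marginals \<open>b < B\<close> \<open>t b \<noteq> dur_closed_form B E b\<close>
    by simp
  moreover have "dur_obj B t \<le> dur_obj B (dur_closed_form B E)"
    using \<open>dur_optimal B E t\<close> dur_feasible_closed_form[OF assms(1-3)] unfolding dur_optimal_def by blast
  ultimately show False
    by linarith
qed

theorem lemma3:
  fixes B :: nat and E :: real and t :: "nat \<Rightarrow> real"
  assumes "B \<ge> 1" and "E > 0"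
    and "dur_optimal B E t"
    and "E > 2 * real B * (real B - 1) * ln 2"
  shows "\<forall>b<B. t b > 0 \<and> t b = E / (4 * real B) + (real b - (real B - 1) / 2) * ln 2"
  using dur_optimal_eq_closed_form[OF assms(1,2,4,3)] dur_closed_form_pos[OF assms(1,2,4)]
  unfolding dur_closed_form_def by auto

end
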